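(* Let $\mathcal{P}=\{\mathbf{c}_1+\mathbf{B},\dots,\mathbf{c}_n+\mathbf{B}\}$ be a packing of $n\ge 1$ unit balls with all centers $\mathbf{c}_i\in\Lambda_{fcc}$. Then $$\frac{n\,\mathrm{vol}_3(\mathbf{B})}{\mathrm{vol}_3\left(\bigcup_{i=1}^n(\mathbf{c}_i+\sqrt2\,\mathbf{B})\right)}<\frac{\pi}{\sqrt{18}}.$$
   Context: $\mathbf{B}$ is the closed unit ball centered at the origin of $\mathbb{E}^3$; $\Lambda_{fcc}$ is the face-centered cubic lattice with shortest non-zero vector of length $2$; $\mathrm{vol}_3$ is volume. *)

theory Defs
  imports "HOL-Analysis.Analysis"
begin

text \<open>Face-centred cubic lattice scaled so that its shortest nonzero vector has length 2:
  the points sqrt 2 (a,b,c) with a,b,c integers and a+b+c even.\<close>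
definition fcc_lattice :: "(real^3) set" where
  "fcc_lattice = {x. \<exists>a b c :: int. even (a + b + c) \<and>
      x = sqrt 2 *\<^sub>R vector [real_of_int a, real_of_int b, real_of_int c]}"

definition unit_ball_packing :: "(real^3) set \<Rightarrow> bool" where
  "unit_ball_packing C \<longleftrightarrow>
     (\<forall>c\<in>C. \<forall>d\<in>C. c \<noteq> d \<longrightarrow> ball c 1 \<inter> ball d 1 = {})"

end

theory Submission
  imports Defs
begin

text \<open>
  Let V be the Voronoi cell of the fcc lattice, i.e. the points at least as close
  to 0 as to any other lattice point.  Three facts about V give the theorem:
  (1) V lies in the ball of radius sqrt 2 (it is the rhombic dodecahedron), so the translates
      c + V for c in C lie in the union U of the balls c + sqrt 2 B;
  (2) translates of V by distinct lattice points overlap only in a null set;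
  (3) vol V \<ge> 4 sqrt 2, because the lattice translates of V cover the fundamental box
      (0, 2 sqrt 2) \<times> (0, sqrt 2) \<times> (0, sqrt 2), whose lattice translates are disjoint.
  Hence vol U \<ge> 4 sqrt 2 n; the inequality is strict because next to the centre of C with the
  largest first coordinate there is a small ball in U covered by no cell c + V.  Then
  n vol B / vol U < n (4/3) pi / (4 sqrt 2 n) = pi / sqrt 18.
\<close>

definition voronoi_cell :: "'a::euclidean_space set \<Rightarrow> 'a set" where
  "voronoi_cell L = {u. \<forall>l\<in>L. norm u \<le> norm (u - l)}"

lemma voronoi_cellD: "u \<in> voronoi_cell L \<Longrightarrow> l \<in> L \<Longrightarrow> norm u \<le> norm (u - l)"
  unfolding voronoi_cell_def by blast

lemma closed_voronoi_cell: "closed (voronoi_cell L)"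
proof -
  have "voronoi_cell L = (\<Inter>l\<in>L. {u. norm u \<le> norm (u - l)})"
    unfolding voronoi_cell_def by blast
  then show ?thesis by (simp add: closed_INT closed_Collect_le continuous_intros)
qed

lemma mem_translate_iff: "y \<in> (+) a ` S \<longleftrightarrow> y - a \<in> (S :: 'a::ab_group_add set)"
  by (auto intro: image_eqI[of _ _ "y - a"])

text \<open>For a set closed under differences, two cells centred at distinct points of L meet only
  on the bisecting hyperplane, hence in a null set.\<close>
lemma voronoi_translates_negligible:
  fixes L :: "'a::euclidean_space set"
  assumes diff: "\<And>l l'. l \<in> L \<Longrightarrow> l' \<in> L \<Longrightarrow> l - l' \<in> L"
    and "c \<in> L" "c' \<in> L" "c \<noteq> c'"
  shows "negligible ((+) c ` voronoi_cell L \<inter> (+) c' ` voronoi_cell L)"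
proof (rule negligible_subset)
  show "negligible {x. (2 *\<^sub>R (c' - c)) \<bullet> x = c' \<bullet> c' - c \<bullet> c}"
    by (rule negligible_hyperplane) (use \<open>c \<noteq> c'\<close> in auto)
  show "(+) c ` voronoi_cell L \<inter> (+) c' ` voronoi_cell L
          \<subseteq> {x. (2 *\<^sub>R (c' - c)) \<bullet> x = c' \<bullet> c' - c \<bullet> c}"
  proof
    fix x assume "x \<in> (+) c ` voronoi_cell L \<inter> (+) c' ` voronoi_cell L"
    then have "x - c \<in> voronoi_cell L" "x - c' \<in> voronoi_cell L"
      by (simp_all add: mem_translate_iff)
    then have "norm (x - c) \<le> norm (x - c - (c' - c))" "norm (x - c') \<le> norm (x - c' - (c - c'))"
      using voronoi_cellD diff assms(2,3) by blast+
    then have "norm (x - c) = norm (x - c')" by simp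
    then have "(x - c) \<bullet> (x - c) = (x - c') \<bullet> (x - c')" by (metis power2_norm_eq_inner)
    then show "x \<in> {x. (2 *\<^sub>R (c' - c)) \<bullet> x = c' \<bullet> c' - c \<bullet> c}"
      by (simp add: inner_diff_left inner_diff_right inner_commute algebra_simps)
  qed
qed

text \<open>For a discrete additive subgroup every point lies in the cell of a nearest lattice point; the
  nearest point can be found among the finitely many lattice points of norm at most 2 |x|.\<close>
lemma voronoi_covering:
  fixes L :: "'a::euclidean_space set"
  assumes add: "\<And>l l'. l \<in> L \<Longrightarrow> l' \<in> L \<Longrightarrow> l + l' \<in> L" and "0 \<in> L"
    and discrete: "\<And>R. finite (L \<inter> cball 0 R)"
  shows "\<exists>l \<in> L \<inter> cball 0 (2 * norm x). x - l \<in> voronoi_cell L"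
proof -
  define S where "S = L \<inter> cball 0 (2 * norm x)"
  have "0 \<in> S" unfolding S_def using \<open>0 \<in> L\<close> by simp
  then obtain l where "is_arg_min (\<lambda>l. norm (x - l)) (\<lambda>l. l \<in> S) l"
    using ex_is_arg_min_if_finite[of S] discrete unfolding S_def by blast
  then have l: "l \<in> S" and closest: "\<And>l'. l' \<in> S \<Longrightarrow> norm (x - l) \<le> norm (x - l')"
    by (auto simp: is_arg_min_linorder)
  have "norm (x - l) \<le> norm (x - l - m)" if "m \<in> L" for m
  proof (cases "l + m \<in> S")
    case True
    then show ?thesis using closest[of "l + m"] by (simp add: algebra_simps)
  next
    case False
    then have "2 * norm x < norm (l + m)"
      using add[of l m] l that unfolding S_def by auto
    also have "\<dots> \<le> norm x + norm (x - l - m)"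
      using norm_triangle_ineq4[of x "x - l - m"] by (simp add: add.commute)
    finally have "norm x < norm (x - l - m)" by simp
    moreover have "norm (x - l) \<le> norm x" using closest[OF \<open>0 \<in> S\<close>] by simp
    ultimately show ?thesis by simp
  qed
  then show ?thesis using l unfolding S_def voronoi_cell_def by blast
qed

text \<open>Translate-cutting argument: if G is covered by finitely many translates l + V, while the
  translates G - l are pairwise disjoint, then cutting G along the cover and shifting the pieces
  back into V shows vol G \<le> vol V.\<close>
lemma measure_le_by_translate_cover:
  fixes G V :: "'a::euclidean_space set"
  assumes G: "G \<in> lmeasurable" and V: "V \<in> lmeasurable" and "finite F"
    and cover: "G \<subseteq> (\<Union>l\<in>F. (+) l ` V)"
    and disj: "\<And>l l'. l \<in> F \<Longrightarrow> l' \<in> F \<Longrightarrow> l \<noteq> l' \<Longrightarrow> (+) (-l) ` G \<inter> (+) (-l') ` G = {}"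
  shows "measure lebesgue G \<le> measure lebesgue V"
proof -
  have piece: "(+) (-l) ` G \<inter> V \<in> lmeasurable" for l
    using G V by (intro fmeasurable_Int_fmeasurable measurable_translation fmeasurableD)
  have "measure lebesgue G = measure lebesgue (\<Union>l\<in>F. G \<inter> (+) l ` V)"
    using cover by (metis Int_UN_distrib inf.absorb1)
  also have "\<dots> \<le> (\<Sum>l\<in>F. measure lebesgue (G \<inter> (+) l ` V))"
    using G V \<open>finite F\<close>
    by (intro measure_UNION_le fmeasurableD fmeasurable_Int_fmeasurable measurable_translation)
  also have "\<dots> = (\<Sum>l\<in>F. measure lebesgue ((+) (-l) ` G \<inter> V))"
  proof (rule sum.cong[OF refl])
    fix l
    have "(+) (-l) ` (G \<inter> (+) l ` V) = (+) (-l) ` G \<inter> V"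
      by (auto simp: mem_translate_iff)
    then show "measure lebesgue (G \<inter> (+) l ` V) = measure lebesgue ((+) (-l) ` G \<inter> V)"
      by (metis measure_translation)
  qed
  also have "\<dots> = measure lebesgue (\<Union>l\<in>F. (+) (-l) ` G \<inter> V)"
  proof (intro measure_negligible_finite_Union_image[symmetric] \<open>finite F\<close> piece)
    show "pairwise (\<lambda>l l'. negligible ((+) (-l) ` G \<inter> V \<inter> ((+) (-l') ` G \<inter> V))) F"
      using disj by (auto simp: pairwise_def Int_ac)
  qed
  also have "\<dots> \<le> measure lebesgue V"
  proof (rule measure_mono_fmeasurable[OF _ _ V])
    show "(\<Union>l\<in>F. (+) (-l) ` G \<inter> V) \<in> sets lebesgue"
      using piece \<open>finite F\<close> by (intro fmeasurableD fmeasurable.finite_UN)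
  qed auto
  finally show ?thesis .
qed

lemma measure_union_translates:
  fixes V :: "'a::euclidean_space set"
  assumes "finite C" "V \<in> lmeasurable"
    and "\<And>c c'. c \<in> C \<Longrightarrow> c' \<in> C \<Longrightarrow> c \<noteq> c' \<Longrightarrow> negligible ((+) c ` V \<inter> (+) c' ` V)"
  shows "measure lebesgue (\<Union>c\<in>C. (+) c ` V) = card C * measure lebesgue V"
proof -
  have "measure lebesgue (\<Union>c\<in>C. (+) c ` V) = (\<Sum>c\<in>C. measure lebesgue ((+) c ` V))"
    using assms by (intro measure_negligible_finite_Union_image measurable_translation)
      (auto simp: pairwise_def)
  then show ?thesis by (simp add: measure_translation)
qed

lemma vec3_eq_iff: "(x::real^3) = y \<longleftrightarrow> x$1 = y$1 \<and> x$2 = y$2 \<and> x$3 = y$3"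
  by (simp add: vec_eq_iff forall_3)

lemma prod_UNIV_3: "prod f (UNIV::3 set) = f 1 * f 2 * f 3"
  unfolding UNIV_3 by (simp add: ac_simps)

lemma inner_vec3: "(x::real^3) \<bullet> y = x$1 * y$1 + x$2 * y$2 + x$3 * y$3"
  by (simp add: inner_vec_def sum_3)

lemma fcc_iff:
  "l \<in> fcc_lattice \<longleftrightarrow> (\<exists>a b c::int. even (a + b + c) \<and>
     l$1 = sqrt 2 * a \<and> l$2 = sqrt 2 * b \<and> l$3 = sqrt 2 * c)"
  unfolding fcc_lattice_def by (auto simp: vec3_eq_iff)

lemma fcc_zero: "0 \<in> fcc_lattice"
  unfolding fcc_iff by (intro exI[of _ 0]) simp

lemma fcc_add:
  assumes "l \<in> fcc_lattice" "l' \<in> fcc_lattice" shows "l + l' \<in> fcc_lattice"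
proof -
  obtain a b c where "even (a + b + c)" "l$1 = sqrt 2 * a" "l$2 = sqrt 2 * b" "l$3 = sqrt 2 * c"
    using assms(1) fcc_iff by blast
  moreover obtain a' b' c' where "even (a' + b' + c')"
    "l'$1 = sqrt 2 * a'" "l'$2 = sqrt 2 * b'" "l'$3 = sqrt 2 * c'"
    using assms(2) fcc_iff by blast
  ultimately show ?thesis unfolding fcc_iff
    by (intro exI[of _ "a + a'"] exI[of _ "b + b'"] exI[of _ "c + c'"]) (auto simp: algebra_simps)
qed

lemma fcc_uminus:
  assumes "l \<in> fcc_lattice" shows "- l \<in> fcc_lattice"
proof -
  obtain a b c where "even (a + b + c)" "l$1 = sqrt 2 * a" "l$2 = sqrt 2 * b" "l$3 = sqrt 2 * c"
    using assms fcc_iff by blast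
  then show ?thesis unfolding fcc_iff
    by (intro exI[of _ "- a"] exI[of _ "- b"] exI[of _ "- c"]) (auto simp: algebra_simps)
qed

lemma fcc_diff: "l \<in> fcc_lattice \<Longrightarrow> l' \<in> fcc_lattice \<Longrightarrow> l - l' \<in> fcc_lattice"
  using fcc_add[OF _ fcc_uminus] by simp

text \<open>Minimal norm 2: the squared norm 2(a^2 + b^2 + c^2) of a lattice point is twice an even
  number, since a^2 + b^2 + c^2 has the parity of a + b + c.\<close>
lemma fcc_min_norm:
  assumes "l \<in> fcc_lattice" "l \<noteq> 0" shows "2 \<le> norm l"
proof -
  obtain a b c where abc: "even (a + b + c)" "l$1 = sqrt 2 * a" "l$2 = sqrt 2 * b" "l$3 = sqrt 2 * c"
    using assms(1) fcc_iff by blast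
  have "even (a*a + b*b + c*c)" using abc(1) by auto
  moreover have "a \<noteq> 0 \<or> b \<noteq> 0 \<or> c \<noteq> 0" using assms(2) abc by (auto simp: vec3_eq_iff)
  then have "0 < a*a + b*b + c*c"
    by (smt (verit) not_sum_squares_lt_zero sum_squares_gt_zero_iff zero_le_square)
  ultimately have "2 \<le> a*a + b*b + c*c" by (rule zdvd_imp_le)
  then have "(2::real) \<le> of_int (a*a + b*b + c*c)" by linarith
  moreover have "l \<bullet> l = 2 * of_int (a*a + b*b + c*c)"
    unfolding inner_vec3 abc by (simp add: algebra_simps)
  ultimately have "2\<^sup>2 \<le> (norm l)\<^sup>2" by (simp add: power2_norm_eq_inner)
  then show ?thesis by (rule power2_le_imp_le) simp
qed

lemma fcc_finite_cball: "finite (fcc_lattice \<inter> cball 0 R)"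
proof -
  define K where "K = \<lceil>R\<rceil>"
  define f :: "int \<times> int \<times> int \<Rightarrow> real^3"
    where "f = (\<lambda>(a, b, c). sqrt 2 *\<^sub>R vector [real_of_int a, real_of_int b, real_of_int c])"
  have bound: "a \<in> {-K..K}" if "\<bar>sqrt 2 * real_of_int a\<bar> \<le> R" for a
  proof -
    have "\<bar>real_of_int a\<bar> \<le> sqrt 2 * \<bar>real_of_int a\<bar>" by (simp add: mult_le_cancel_right1)
    then have "real_of_int \<bar>a\<bar> \<le> real_of_int K"
      using that le_of_int_ceiling[of R] unfolding K_def by (simp add: abs_mult) linarith
    then show ?thesis by auto
  qed
  have "fcc_lattice \<inter> cball 0 R \<subseteq> f ` ({-K..K} \<times> {-K..K} \<times> {-K..K})"
  proof
    fix l assume l: "l \<in> fcc_lattice \<inter> cball 0 R"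
    then obtain a b c :: int where abc: "l$1 = sqrt 2 * a" "l$2 = sqrt 2 * b" "l$3 = sqrt 2 * c"
      using fcc_iff by blast
    have "\<bar>l$i\<bar> \<le> R" for i using component_le_norm_cart[of l i] l by auto
    then have "a \<in> {-K..K}" "b \<in> {-K..K}" "c \<in> {-K..K}" using bound abc by metis+
    moreover have "l = f (a, b, c)" unfolding f_def using abc by (simp add: vec3_eq_iff)
    ultimately show "l \<in> f ` ({-K..K} \<times> {-K..K} \<times> {-K..K})" by blast
  qed
  then show ?thesis by (rule finite_subset) auto
qed

lemma fcc_voronoi_ineq:
  fixes a b c :: int
  assumes "u \<in> voronoi_cell fcc_lattice" "even (a + b + c)"
  shows "sqrt 2 * (a * u$1 + b * u$2 + c * u$3) \<le> a*a + b*b + c*c"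
proof -
  define l :: "real^3" where "l = sqrt 2 *\<^sub>R vector [real_of_int a, real_of_int b, real_of_int c]"
  have "l \<in> fcc_lattice" unfolding fcc_iff l_def using assms(2) by auto
  then have "u \<bullet> u \<le> (u - l) \<bullet> (u - l)" using voronoi_cellD[OF assms(1)] by (simp add: norm_le)
  then have "2 * (u \<bullet> l) \<le> l \<bullet> l" by (simp add: inner_diff_left inner_diff_right inner_commute)
  moreover have "u \<bullet> l = sqrt 2 * (a * u$1 + b * u$2 + c * u$3)"
    unfolding inner_vec3 l_def by (simp add: algebra_simps)
  moreover have "l \<bullet> l = 2 * (a*a + b*b + c*c)"
    unfolding inner_vec3 l_def by (simp add: algebra_simps)
  ultimately show ?thesis by simp
qed

text \<open>The four Voronoi inequalities against sqrt 2 (\<plusminus>e_i \<plusminus> e_j) bound |u_i| + |u_j|.\<close>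
lemma abs_add_le_of_four_ineqs:
  fixes x y :: real
  assumes "sqrt 2 * (x + y) \<le> 2" "sqrt 2 * (x - y) \<le> 2" "sqrt 2 * (- x + y) \<le> 2" "sqrt 2 * (- x - y) \<le> 2"
  shows "\<bar>x\<bar> + \<bar>y\<bar> \<le> sqrt 2"
proof -
  have "sqrt 2 * (\<bar>x\<bar> + \<bar>y\<bar>) \<le> sqrt 2 * sqrt 2"
    using assms by (cases "x \<ge> 0"; cases "y \<ge> 0") (auto simp: algebra_simps)
  then show ?thesis by (rule mult_left_le_imp_le) simp
qed

lemma sum_squares_le_of_pair_sums:
  fixes a b c t :: real
  assumes "0 \<le> a" "0 \<le> b" "0 \<le> c" "a + b \<le> t" "a + c \<le> t" "b + c \<le> t"
  shows "a*a + b*b + c*c \<le> t*t"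
proof -
  have "b*b \<le> b*(t - a)" "c*c \<le> c*(t - a)" using assms by (auto intro: mult_left_mono)
  moreover have "(b + c)*(t - a) \<le> t*(t - a)" using assms by (intro mult_right_mono) auto
  moreover have "0 \<le> a*(t - a)" using assms by auto
  ultimately show ?thesis by (simp add: algebra_simps)
qed

lemma fcc_voronoi_norm_le:
  assumes "u \<in> voronoi_cell fcc_lattice" shows "norm u \<le> sqrt 2"
proof -
  have e: "sqrt 2 * (x * u$1 + y * u$2 + z * u$3) \<le> x*x + y*y + z*z"
    if "even (x + y + z)" for x y z :: int
    using fcc_voronoi_ineq[OF assms that] .
  have "\<bar>u$1\<bar> + \<bar>u$2\<bar> \<le> sqrt 2"
    by (rule abs_add_le_of_four_ineqs)
      (use e[of 1 1 0] e[of 1 "-1" 0] e[of "-1" 1 0] e[of "-1" "-1" 0] in auto)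
  moreover have "\<bar>u$1\<bar> + \<bar>u$3\<bar> \<le> sqrt 2"
    by (rule abs_add_le_of_four_ineqs)
      (use e[of 1 0 1] e[of 1 0 "-1"] e[of "-1" 0 1] e[of "-1" 0 "-1"] in auto)
  moreover have "\<bar>u$2\<bar> + \<bar>u$3\<bar> \<le> sqrt 2"
    by (rule abs_add_le_of_four_ineqs)
      (use e[of 0 1 1] e[of 0 1 "-1"] e[of 0 "-1" 1] e[of 0 "-1" "-1"] in auto)
  ultimately have "\<bar>u$1\<bar>*\<bar>u$1\<bar> + \<bar>u$2\<bar>*\<bar>u$2\<bar> + \<bar>u$3\<bar>*\<bar>u$3\<bar> \<le> sqrt 2 * sqrt 2"
    by (intro sum_squares_le_of_pair_sums) auto
  then have "(norm u)\<^sup>2 \<le> (sqrt 2)\<^sup>2"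
    by (simp add: power2_norm_eq_inner inner_vec3 abs_mult[symmetric])
  then show ?thesis by (rule power2_le_imp_le) simp
qed

lemma fcc_voronoi_lmeasurable: "voronoi_cell fcc_lattice \<in> lmeasurable"
proof (rule lmeasurable_compact)
  show "compact (voronoi_cell fcc_lattice)"
    using fcc_voronoi_norm_le closed_voronoi_cell by (auto simp: compact_eq_bounded_closed bounded_iff)
qed

text \<open>A fundamental domain of the fcc lattice: the box (0, 2 sqrt 2) \<times> (0, sqrt 2) \<times> (0, sqrt 2).\<close>
definition fcc_box :: "(real^3) set" where
  "fcc_box = box 0 (vector [2 * sqrt 2, sqrt 2, sqrt 2])"

lemma mem_fcc_box:
  "x \<in> fcc_box \<longleftrightarrow>
     0 < x$1 \<and> x$1 < 2 * sqrt 2 \<and> 0 < x$2 \<and> x$2 < sqrt 2 \<and> 0 < x$3 \<and> x$3 < sqrt 2"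
  unfolding fcc_box_def mem_box_cart forall_3 by auto

lemma measure_fcc_box: "measure lebesgue fcc_box = 4 * sqrt 2"
proof -
  define g :: "real^3" where "g = vector [2 * sqrt 2, sqrt 2, sqrt 2]"
  have g: "g$1 = 2 * sqrt 2" "g$2 = sqrt 2" "g$3 = sqrt 2" unfolding g_def by simp_all
  have "measure lebesgue (box 0 g) = measure lborel (box 0 g)"
    by (rule measure_completion) simp
  also have "\<dots> = measure lborel (cbox 0 g)"
    by (simp only: measure_lborel_box_eq measure_lborel_cbox_eq)
  also have "\<dots> = (\<Prod>i\<in>UNIV. g$i - 0$i)"
    by (rule content_cbox_cart) (simp add: interval_ne_empty_cart forall_3 g)
  also have "\<dots> = (2 * sqrt 2) * sqrt 2 * sqrt 2"
    unfolding prod_UNIV_3 g by simp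
  finally show ?thesis unfolding fcc_box_def g_def by (simp add: mult.assoc)
qed

lemma int_dist_lt_of_scaled:
  fixes p q k :: int
  assumes "\<bar>sqrt 2 * p - sqrt 2 * q\<bar> < sqrt 2 * k" shows "\<bar>p - q\<bar> < k"
proof -
  have "sqrt 2 * \<bar>real_of_int (p - q)\<bar> < sqrt 2 * k"
    using assms by (simp add: abs_mult right_diff_distrib[symmetric])
  then show ?thesis by simp
qed

lemma fcc_box_translates_disjoint:
  assumes "l \<in> fcc_lattice" "l' \<in> fcc_lattice" "y + l \<in> fcc_box" "y + l' \<in> fcc_box"
  shows "l = l'"
proof -
  obtain a b c where abc: "even (a + b + c)" "l$1 = sqrt 2 * a" "l$2 = sqrt 2 * b" "l$3 = sqrt 2 * c"
    using assms(1) fcc_iff by blast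
  obtain a' b' c' where abc': "even (a' + b' + c')"
    "l'$1 = sqrt 2 * a'" "l'$2 = sqrt 2 * b'" "l'$3 = sqrt 2 * c'"
    using assms(2) fcc_iff by blast
  have box: "0 < y$1 + sqrt 2 * a" "y$1 + sqrt 2 * a < sqrt 2 * 2"
    "0 < y$2 + sqrt 2 * b" "y$2 + sqrt 2 * b < sqrt 2 * 1"
    "0 < y$3 + sqrt 2 * c" "y$3 + sqrt 2 * c < sqrt 2 * 1"
    "0 < y$1 + sqrt 2 * a'" "y$1 + sqrt 2 * a' < sqrt 2 * 2"
    "0 < y$2 + sqrt 2 * b'" "y$2 + sqrt 2 * b' < sqrt 2 * 1"
    "0 < y$3 + sqrt 2 * c'" "y$3 + sqrt 2 * c' < sqrt 2 * 1"
    using assms(3,4) abc abc' unfolding mem_fcc_box by simp_all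
  have "\<bar>a - a'\<bar> < 2" by (rule int_dist_lt_of_scaled) (use box in \<open>simp only: of_int_numeral of_int_1 abs_less_iff; linarith\<close>)
  moreover have "\<bar>b - b'\<bar> < 1" by (rule int_dist_lt_of_scaled) (use box in \<open>simp only: of_int_numeral of_int_1 abs_less_iff; linarith\<close>)
  moreover have "\<bar>c - c'\<bar> < 1" by (rule int_dist_lt_of_scaled) (use box in \<open>simp only: of_int_numeral of_int_1 abs_less_iff; linarith\<close>)
  ultimately have "b = b'" "c = c'" "\<bar>a - a'\<bar> < 2" by simp_all
  moreover from this have "even (a - a')" using abc(1) abc'(1) by presburger
  ultimately have "a = a'" by presburger
  with \<open>b = b'\<close> \<open>c = c'\<close> show ?thesis using abc abc' by (simp add: vec3_eq_iff)
qed

lemma fcc_voronoi_measure: "4 * sqrt 2 \<le> measure lebesgue (voronoi_cell fcc_lattice)"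
proof -
  define F where "F = fcc_lattice \<inter> cball 0 12"
  have small: "norm x \<le> 6" if "x \<in> fcc_box" for x
  proof -
    have "norm x \<le> \<bar>x$1\<bar> + \<bar>x$2\<bar> + \<bar>x$3\<bar>" using norm_le_l1_cart[of x] by (simp add: sum_3)
    also have "\<dots> \<le> 4 * sqrt 2" using that unfolding mem_fcc_box by auto
    also have "\<dots> \<le> 4 * (3/2)" using real_le_lsqrt[of "3/2" 2] by (simp add: power2_eq_square)
    finally show ?thesis by simp
  qed
  have cover: "fcc_box \<subseteq> (\<Union>l\<in>F. (+) l ` voronoi_cell fcc_lattice)"
  proof
    fix x assume "x \<in> fcc_box"
    then obtain l where "l \<in> fcc_lattice \<inter> cball 0 (2 * norm x)" "x - l \<in> voronoi_cell fcc_lattice"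
      using voronoi_covering[OF fcc_add fcc_zero fcc_finite_cball] by blast
    moreover have "cball 0 (2 * norm x) \<subseteq> cball (0::real^3) 12" using small[OF \<open>x \<in> fcc_box\<close>] by auto
    ultimately show "x \<in> (\<Union>l\<in>F. (+) l ` voronoi_cell fcc_lattice)"
      unfolding F_def by (auto simp: mem_translate_iff)
  qed
  have disjoint: "(+) (-l) ` fcc_box \<inter> (+) (-l') ` fcc_box = {}"
    if "l \<in> F" "l' \<in> F" "l \<noteq> l'" for l l'
  proof (rule equals0I)
    fix y assume "y \<in> (+) (-l) ` fcc_box \<inter> (+) (-l') ` fcc_box"
    then have "y + l \<in> fcc_box" "y + l' \<in> fcc_box"
      by (simp_all only: Int_iff mem_translate_iff diff_minus_eq_add)
    then have "l = l'" using fcc_box_translates_disjoint that unfolding F_def by blast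
    then show False using \<open>l \<noteq> l'\<close> by simp
  qed
  have "measure lebesgue fcc_box \<le> measure lebesgue (voronoi_cell fcc_lattice)"
  proof (rule measure_le_by_translate_cover[OF _ fcc_voronoi_lmeasurable _ cover disjoint])
    show "fcc_box \<in> lmeasurable" by (simp add: fcc_box_def)
    show "finite F" unfolding F_def by (rule fcc_finite_cball)
  qed
  then show ?thesis by (simp add: measure_fcc_box)
qed

lemma fcc_near_other_point_uncovered:
  assumes "C \<subseteq> fcc_lattice" "d \<in> fcc_lattice" "d \<notin> C" "norm (u - d) < 1"
  shows "u \<notin> (\<Union>c\<in>C. (+) c ` voronoi_cell fcc_lattice)"
proof
  assume "u \<in> (\<Union>c\<in>C. (+) c ` voronoi_cell fcc_lattice)"
  then obtain c where c: "c \<in> C" "u - c \<in> voronoi_cell fcc_lattice"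
    by (auto simp: mem_translate_iff)
  then have "c \<in> fcc_lattice" using assms(1) by blast
  then have "norm (u - c) \<le> norm (u - c - (d - c))"
    using voronoi_cellD[OF c(2)] fcc_diff[OF assms(2)] by blast
  then have "norm (u - c) < 1" using assms(4) by simp
  moreover have "norm (d - c) \<le> norm (u - c) + norm (u - d)"
    using norm_triangle_ineq4[of "u - c" "u - d"] by simp
  ultimately have "norm (d - c) < 2" using assms(4) by linarith
  moreover have "2 \<le> norm (d - c)"
    using fcc_min_norm fcc_diff[OF assms(2) \<open>c \<in> fcc_lattice\<close>] assms(3) c(1) by force
  ultimately show False by simp
qed

text \<open>The balls of radius sqrt 2 around a finite set of lattice points are not exhausted by the
  Voronoi cells: beyond the centre with the largest first coordinate there is a small ball
  inside the union of the balls but outside all Voronoi cells of C.\<close>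
lemma fcc_uncovered_ball:
  assumes "finite C" "C \<noteq> {}" "C \<subseteq> fcc_lattice"
  obtains E where "E \<in> lmeasurable" "0 < measure lebesgue E" "E \<subseteq> (\<Union>c\<in>C. cball c (sqrt 2))"
    "E \<inter> (\<Union>c\<in>C. (+) c ` voronoi_cell fcc_lattice) = {}"
proof -
  obtain c0 where c0: "c0 \<in> C" "\<And>c. c \<in> C \<Longrightarrow> c$1 \<le> c0$1"
    using Max_in[of "(\<lambda>c. c$1) ` C"] Max_ge[of "(\<lambda>c. c$1) ` C"] assms(1,2) by fastforce
  define v :: "real^3" where "v = sqrt 2 *\<^sub>R vector [1, 1, 0]"
  define d where "d = c0 + v"
  define p where "p = c0 + (3/5) *\<^sub>R v"
  have "v \<in> fcc_lattice" unfolding v_def fcc_iff by (intro exI[of _ 1] exI[of _ 0]) simp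
  then have "d \<in> fcc_lattice" unfolding d_def using c0(1) assms(3) by (blast intro: fcc_add)
  moreover have "d \<notin> C" using c0(2)[of d] unfolding d_def v_def by auto
  moreover have "norm (p - d) \<le> 4/5" "norm (p - c0) \<le> 6/5"
    unfolding norm_le_square p_def d_def v_def by (simp_all add: inner_vec3 algebra_simps power2_eq_square)
  moreover have "13/10 < sqrt 2" by (rule real_less_rsqrt) (simp add: power2_eq_square)
  ultimately have "norm (u - d) < 1" "norm (u - c0) < sqrt 2" if "norm (u - p) < 1/10" for u
    using that norm_triangle_ineq[of "u - p" "p - d"] norm_triangle_ineq[of "u - p" "p - c0"]
    by auto
  then have "ball p (1/10) \<subseteq> (\<Union>c\<in>C. cball c (sqrt 2))"
    "ball p (1/10) \<inter> (\<Union>c\<in>C. (+) c ` voronoi_cell fcc_lattice) = {}"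
    using c0(1) fcc_near_other_point_uncovered[OF assms(3) \<open>d \<in> fcc_lattice\<close> \<open>d \<notin> C\<close>]
    by (fastforce simp: dist_norm norm_minus_commute)+
  moreover have "0 < measure lebesgue (ball p (1/10))"
    using measure_completion[of "ball p (1/10)"] by simp
  ultimately show ?thesis by (intro that[of "ball p (1/10)"]) simp_all
qed

text \<open>Volume bound for the union of the enlarged balls: the Voronoi cells of the centres fill
  at least 4 sqrt 2 per centre, and the extra ball makes the inequality strict.\<close>
lemma fcc_union_cballs_measure:
  assumes "finite C" "C \<noteq> {}" "C \<subseteq> fcc_lattice"
  shows "4 * sqrt 2 * card C < measure lebesgue (\<Union>c\<in>C. cball c (sqrt 2))"
proof -
  define U where "U = (\<Union>c\<in>C. cball c (sqrt 2))"
  define W where "W = (\<Union>c\<in>C. (+) c ` voronoi_cell fcc_lattice)"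
  obtain E where E: "E \<in> lmeasurable" "0 < measure lebesgue E" "E \<subseteq> U" "E \<inter> W = {}"
    using fcc_uncovered_ball[OF assms] unfolding U_def W_def by blast
  have U: "U \<in> lmeasurable" unfolding U_def using assms(1) by (intro lmeasurable_compact) auto
  have W: "W \<in> lmeasurable"
    unfolding W_def using assms(1) fcc_voronoi_lmeasurable
    by (intro fmeasurable.finite_UN measurable_translation)
  have "W \<subseteq> U"
    using fcc_voronoi_norm_le unfolding U_def W_def
    by (fastforce simp: mem_translate_iff dist_norm norm_minus_commute)
  have "measure lebesgue W = card C * measure lebesgue (voronoi_cell fcc_lattice)"
    unfolding W_def using assms(1,3)
    by (intro measure_union_translates fcc_voronoi_lmeasurable voronoi_translates_negligible)
      (auto intro: fcc_diff)
  also have "4 * sqrt 2 * card C \<le> \<dots>"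
    using fcc_voronoi_measure by (simp add: mult.commute mult_left_mono)
  finally have "4 * sqrt 2 * card C < measure lebesgue W + measure lebesgue E"
    using E(2) by linarith
  also have "\<dots> = measure lebesgue (W \<union> E)"
    using measure_Un3[OF W E(1)] E(4) by (simp add: Int_commute)
  also have "\<dots> \<le> measure lebesgue U"
    using \<open>W \<subseteq> U\<close> E(1,3) U W by (intro measure_mono_fmeasurable) auto
  finally show ?thesis unfolding U_def .
qed

theorem mainTheorem10:
  fixes C :: "(real^3) set" and n :: nat
  assumes "finite C" and "card C = n" and "n \<ge> 1"
    and "C \<subseteq> fcc_lattice"
    and "unit_ball_packing C"
  shows "real n * measure lebesgue (cball (0::real^3) 1)
           / measure lebesgue (\<Union>c\<in>C. (\<lambda>x. c + x) ` ((\<lambda>y. sqrt 2 *\<^sub>R y) ` cball 0 1))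
         < pi / sqrt 18"
proof -
  define M where "M = measure lebesgue (\<Union>c\<in>C. cball c (sqrt 2))"
  have union: "(\<Union>c\<in>C. (\<lambda>x. c + x) ` ((\<lambda>y. sqrt 2 *\<^sub>R y) ` cball 0 1)) = (\<Union>c\<in>C. cball c (sqrt 2))"
    by (simp add: cball_scale)
  have ball: "measure lebesgue (cball (0::real^3) 1) = 4/3 * pi"
    using measure_completion[of "cball (0::real^3) 1"] by (simp add: content_cball unit_ball_vol_3)
  have "C \<noteq> {}" using assms(2,3) by auto
  then have bound: "4 * sqrt 2 * n < M"
    unfolding M_def using fcc_union_cballs_measure assms(1,2,4) by blast
  have "0 < 4 * sqrt 2 * n" using assms(3) by simp
  moreover from this have "0 < M" using bound by linarith
  ultimately have "n * (4/3 * pi) / M < n * (4/3 * pi) / (4 * sqrt 2 * n)"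
    using bound assms(3) by (intro divide_strict_left_mono mult_pos_pos) auto
  also have "\<dots> = pi / (3 * sqrt 2)" using assms(3) by (simp add: field_simps)
  also have "3 * sqrt 2 = sqrt 18" using real_sqrt_mult[of 9 2] by simp
  finally show ?thesis unfolding union ball M_def .
qed

end
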